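(* Let $\mathbb L_h$ be an achiral lattice, and let $\mathbb L_e$ be an elliptic lattice which is generated by $2$-roots and has discriminant of period 2. Then their direct sum, $\mathbb L= \mathbb L_e +\mathbb L_h$, is also an achiral lattice.
   Context: Lattices considered are even lattices $\mathbb L$ of signature $(n,1)$ with $\operatorname{discr}\mathbb L=\operatorname{discr}_2\mathbb L+\mathbb Z/3$, $\operatorname{discr}_2$ of period 2. Roots: 2-roots ($v^2=2$) and 6-roots ($v^2=6$, $v\cdot\mathbb L\subset3\mathbb Z$); their reflections generate $W$, whose fundamental chambers in the hyperbolic space $\Lambda$ (projectivized negative cone) are the cells $P$; each cell lifts to two cells $\pm P^\#$ in the double cover $\Lambda^\#$. An automorphism preserving $P$ is $P$-direct if it preserves $P^\#$, and $\mathbb Z/3$-reversing if it acts as $-\operatorname{id}$ on $\operatorname{discr}_3\mathbb L=\mathbb Z/3$. A lattice is achiral if it admits an automorphism that is $\mathbb Z/3$-reversing and $P$-direct for some cell $P$. "Elliptic" means positive definite; $+$ is orthogonal direct sum. *)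

theory Defs
  imports "HOL-Analysis.Analysis"
begin

text \<open>A lattice of rank CARD('n) is Z^'n equipped with an integral symmetric
Gram matrix G. Everything is embedded in R^'n.\<close>

definition rvec :: "int^'n \<Rightarrow> real^'n" where
  "rvec v = (\<chi> i. real_of_int (v$i))"

definition rmat :: "int^'n^'m \<Rightarrow> real^'n^'m" where
  "rmat g = (\<chi> i j. real_of_int (g$i$j))"

definition bil :: "int^'n^'n \<Rightarrow> 'a::comm_ring_1^'n \<Rightarrow> 'a^'n \<Rightarrow> 'a" where
  "bil G x y = (\<Sum>i\<in>UNIV. \<Sum>j\<in>UNIV. x$i * of_int (G$i$j) * y$j)"

definition symmetric_gram :: "int^'n^'n \<Rightarrow> bool" where
  "symmetric_gram G \<longleftrightarrow> (\<forall>i j. G$i$j = G$j$i)"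

definition even_lattice :: "int^'n^'n \<Rightarrow> bool" where
  "even_lattice G \<longleftrightarrow> (\<forall>v::int^'n. even (bil G v v))"

text \<open>Signature (n,1), n = CARD('n) - 1: real congruence to diag(1,...,1,-1).\<close>
definition hyperbolic_signature :: "int^'n^'n \<Rightarrow> bool" where
  "hyperbolic_signature G \<longleftrightarrow>
     (\<exists>P::real^'n^'n. \<exists>k. invertible P \<and>
        transpose P ** rmat G ** P = (\<chi> i j. if i = j then (if i = k then -1 else 1) else 0))"

text \<open>Elliptic = positive definite.\<close>
definition positive_definite :: "int^'n^'n \<Rightarrow> bool" where
  "positive_definite G \<longleftrightarrow> (\<forall>x::real^'n. x \<noteq> 0 \<longrightarrow> bil G x x > 0)"

definition lat :: "(real^'n) set" where
  "lat = range rvec"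

definition dual_lat :: "int^'n^'n \<Rightarrow> (real^'n) set" where
  "dual_lat G = {x. \<forall>v::int^'n. bil G x (rvec v) \<in> \<int>}"

text \<open>k-torsion of the discriminant group L^*/L (as a set of representatives in L^*)
  and the congruence modulo L.\<close>
definition disc_torsion :: "int^'n^'n \<Rightarrow> real \<Rightarrow> (real^'n) set" where
  "disc_torsion G k = {x \<in> dual_lat G. k *\<^sub>R x \<in> lat}"

definition mod_lat :: "((real^'n) \<times> (real^'n)) set" where
  "mod_lat = {(x, y). x - y \<in> lat}"

text \<open>discr L = discr_2 L + Z/3 with discr_2 of period 2: the discriminant group is
  killed by 6 and its 3-primary part has order 3.\<close>
definition discr_condition :: "int^'n^'n \<Rightarrow> bool" where
  "discr_condition G \<longleftrightarrow>
     (\<forall>x\<in>dual_lat G. 6 *\<^sub>R x \<in> lat) \<and> card (disc_torsion G 3 // mod_lat) = 3"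

definition discr_period2 :: "int^'n^'n \<Rightarrow> bool" where
  "discr_period2 G \<longleftrightarrow> (\<forall>x\<in>dual_lat G. 2 *\<^sub>R x \<in> lat)"

definition considered_lattice :: "int^'n^'n \<Rightarrow> bool" where
  "considered_lattice G \<longleftrightarrow> symmetric_gram G \<and> even_lattice G \<and>
     hyperbolic_signature G \<and> discr_condition G"

definition two_roots :: "int^'n^'n \<Rightarrow> (int^'n) set" where
  "two_roots G = {v. bil G v v = 2}"

definition six_roots :: "int^'n^'n \<Rightarrow> (int^'n) set" where
  "six_roots G = {v. bil G v v = 6 \<and> (\<forall>w. 3 dvd bil G v w)}"

definition roots :: "int^'n^'n \<Rightarrow> (int^'n) set" where
  "roots G = two_roots G \<union> six_roots G"

inductive_set zspan :: "(int^'n) set \<Rightarrow> (int^'n) set" for S where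
  zero: "0 \<in> zspan S"
| add: "v \<in> S \<Longrightarrow> w \<in> zspan S \<Longrightarrow> v + w \<in> zspan S"
| sub: "v \<in> S \<Longrightarrow> w \<in> zspan S \<Longrightarrow> w - v \<in> zspan S"

definition generated_by_2roots :: "int^'n^'n \<Rightarrow> bool" where
  "generated_by_2roots G \<longleftrightarrow> zspan (two_roots G) = UNIV"

definition negative_cone :: "int^'n^'n \<Rightarrow> (real^'n) set" where
  "negative_cone G = {x. bil G x x < 0}"

text \<open>Cells P^# of the double cover: connected components of the negative cone
  minus the mirrors of all roots (open cones over the cells).\<close>
definition cells_sharp :: "int^'n^'n \<Rightarrow> (real^'n) set set" where
  "cells_sharp G = components (negative_cone G - (\<Union>r\<in>roots G. {x. bil G x (rvec r) = 0}))"

definition automorphism :: "int^'n^'n \<Rightarrow> int^'n^'n \<Rightarrow> bool" where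
  "automorphism G g \<longleftrightarrow> (\<exists>h. h ** g = mat 1 \<and> g ** h = mat 1) \<and>
     (\<forall>v w. bil G (g *v v) (g *v w) = bil G v w)"

text \<open>g acts as -id on discr_3 L.\<close>
definition Z3_reversing :: "int^'n^'n \<Rightarrow> int^'n^'n \<Rightarrow> bool" where
  "Z3_reversing G g \<longleftrightarrow> (\<forall>x\<in>disc_torsion G 3. rmat g *v x + x \<in> lat)"

definition P_direct :: "int^'n^'n \<Rightarrow> (real^'n) set \<Rightarrow> bool" where
  "P_direct g K \<longleftrightarrow> (\<lambda>x. rmat g *v x) ` K = K"

definition achiral :: "int^'n^'n \<Rightarrow> bool" where
  "achiral G \<longleftrightarrow> considered_lattice G \<and>
     (\<exists>g K. automorphism G g \<and> K \<in> cells_sharp G \<and> Z3_reversing G g \<and> P_direct g K)"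

definition dsum :: "int^'e^'e \<Rightarrow> int^'h^'h \<Rightarrow> int^('e+'h)^('e+'h)" where
  "dsum A B = (\<chi> i j. case (i, j) of (Inl a, Inl b) \<Rightarrow> A$a$b
                                | (Inr a, Inr b) \<Rightarrow> B$a$b
                                | _ \<Rightarrow> 0)"

end

theory Submission
  imports Defs
begin

text \<open>
  The automorphism is the sum g of the identity of L_e and an achiral automorphism g_h of L_h.
  Evenness (L_e is generated by 2-roots), the signature (L_e is positive definite) and the
  discriminant condition pass to L_e + L_h; as discr L_e has period 2, the 3-part of discr L is
  that of L_h, so g is Z/3-reversing.

  For P-directness, join a point y of a g_h-invariant cell of L_h to g_h y by a compact path C in
  that cell and push C slightly into the elliptic direction: for a small generic vector w of
  L_e tensor R, the path w + C avoids every mirror of L. Mirrors of roots of L_e are avoided by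
  genericity of w and mirrors of roots of L_h because C lies in a cell. A mixed root (r_e, r_h)
  has r_h.r_h <= 0, so the pairing of the timelike points of C with r_h stays away from 0 and a
  small w cannot compensate it. Since only finitely many mirrors come near the compact set C,
  "small" can be chosen uniformly. Then the cell of L containing w + C is preserved by g.
\<close>

section \<open>Gram forms over the integers and the reals\<close>

lemma bil_add_left: "bil G (x + y) z = bil G x z + bil G y z"
  by (simp add: bil_def distrib_left distrib_right sum.distrib)

lemma bil_add_right: "bil G z (x + y) = bil G z x + bil G z y"
  by (simp add: bil_def distrib_left distrib_right sum.distrib)

lemma bil_diff_left: "bil G (x - y) z = bil G x z - bil G y z"
  by (simp add: bil_def left_diff_distrib right_diff_distrib sum_subtractf)

lemma bil_diff_right: "bil G z (x - y) = bil G z x - bil G z y"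
  by (simp add: bil_def left_diff_distrib right_diff_distrib sum_subtractf)

lemma bil_zero_left [simp]: "bil G 0 z = 0"
  and bil_zero_right [simp]: "bil G z 0 = 0"
  by (simp_all add: bil_def)

lemma bil_scaleR_left: "bil G (c *\<^sub>R x) z = c * bil G x z"
  and bil_scaleR_right: "bil G z (c *\<^sub>R x) = c * bil G z x"
  for x z :: "real^'n"
  by (simp_all add: bil_def sum_distrib_left mult_ac)

lemma bil_smult_left: "bil G (c *s x) z = c * bil G x z"
  and bil_smult_right: "bil G z (c *s x) = c * bil G z x"
  by (simp_all add: bil_def sum_distrib_left mult_ac)

lemma bil_commute: "symmetric_gram G \<Longrightarrow> bil G x y = bil G y x"
  unfolding bil_def symmetric_gram_def by (subst sum.swap) (simp add: mult_ac)

lemma bil_axis: "bil G (axis i 1) (axis j 1) = of_int (G$i$j)"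
  by (simp add: bil_def axis_def mult_delta_left mult_delta_right sum.delta)

lemma bil_eq_inner: "bil G x y = x \<bullet> (rmat G *v y)"
  by (simp add: bil_def inner_vec_def matrix_vector_mult_def rmat_def sum_distrib_left mult_ac)

lemma continuous_on_bil [continuous_intros]:
  "continuous_on S f \<Longrightarrow> continuous_on S g \<Longrightarrow> continuous_on S (\<lambda>x. bil G (f x) (g x :: real^'n))"
  unfolding bil_def by (intro continuous_intros)

lemma bil_rvec: "bil G (rvec a) (rvec b) = real_of_int (bil G a b)"
  by (simp add: bil_def rvec_def)

lemma rvec_add: "rvec (a + b) = rvec a + rvec b"
  and rvec_diff: "rvec (a - b) = rvec a - rvec b"
  and rvec_smult: "rvec (c *s a) = of_int c *\<^sub>R rvec a"
  by (simp_all add: rvec_def vec_eq_iff)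

lemma rvec_eq_iff [simp]: "rvec a = rvec b \<longleftrightarrow> a = b"
  by (simp add: rvec_def vec_eq_iff)

lemma rvec_0 [simp]: "rvec 0 = 0"
  and rvec_eq_0_iff [simp]: "rvec a = 0 \<longleftrightarrow> a = 0"
  by (simp_all add: rvec_def vec_eq_iff)

lemma rvec_axis: "rvec (axis i 1) = axis i 1"
  by (simp add: rvec_def axis_def vec_eq_iff)

lemma rvec_mult_vec: "rvec (A *v v) = rmat A *v rvec v"
  by (simp add: rvec_def rmat_def matrix_vector_mult_def vec_eq_iff)

lemma rmat_mult: "rmat (A ** B) = rmat A ** rmat B"
  by (simp add: rmat_def matrix_matrix_mult_def vec_eq_iff)

lemma rmat_mat_1 [simp]: "rmat (mat 1) = mat 1"
  by (simp add: rmat_def mat_def vec_eq_iff)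

lemma rvec_in_lat [simp]: "rvec a \<in> lat"
  by (simp add: lat_def)

lemma lat_0 [simp]: "0 \<in> lat"
  using rvec_in_lat[of 0] by simp

lemma lat_add: "x \<in> lat \<Longrightarrow> y \<in> lat \<Longrightarrow> x + y \<in> lat"
  and lat_diff: "x \<in> lat \<Longrightarrow> y \<in> lat \<Longrightarrow> x - y \<in> lat"
  and lat_scaleR_of_int: "x \<in> lat \<Longrightarrow> of_int c *\<^sub>R x \<in> lat"
  unfolding lat_def by (auto simp flip: rvec_add rvec_diff rvec_smult)

lemma lat_subset_dual_lat: "lat \<subseteq> dual_lat G"
  by (auto simp: lat_def dual_lat_def bil_rvec)

lemma positive_definite_bil_int_pos:
  "positive_definite G \<Longrightarrow> v \<noteq> 0 \<Longrightarrow> bil G v v > (0::int)"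
proof -
  assume "positive_definite G" "v \<noteq> 0"
  then have "bil G (rvec v) (rvec v) > 0" by (simp add: positive_definite_def)
  then show ?thesis by (simp add: bil_rvec)
qed

lemma even_lattice_if_generated_by_2roots:
  fixes G :: "int^'n::finite^'n"
  assumes sym: "symmetric_gram G" and gen: "generated_by_2roots G"
  shows "even_lattice G"
  unfolding even_lattice_def
proof
  fix v :: "int^'n"
  have "v \<in> zspan (two_roots G)"
    using gen by (simp add: generated_by_2roots_def)
  then show "even (bil G v v)"
  proof (induction rule: zspan.induct)
    case zero
    then show ?case by simp
  next
    case (add r w)
    have "bil G (r + w) (r + w) = bil G r r + 2 * bil G r w + bil G w w"
      using bil_commute[OF sym, of w r] by (simp add: bil_add_left bil_add_right)
    with add show ?case by (simp add: two_roots_def)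
  next
    case (sub r w)
    have "bil G (w - r) (w - r) = bil G w w - 2 * bil G r w + bil G r r"
      using bil_commute[OF sym, of w r] by (simp add: bil_diff_left bil_diff_right)
    with sub show ?case by (simp add: two_roots_def)
  qed
qed

section \<open>Congruence to the standard forms\<close>

lemma bil_mult_vec:
  "bil G (P *v x) (P *v y) = x \<bullet> ((transpose P ** rmat G ** P) *v y)"
proof -
  have "bil G (P *v x) (P *v y) = (x v* transpose P) \<bullet> (rmat G *v (P *v y))"
    by (simp only: bil_eq_inner vector_transpose_matrix)
  also have "\<dots> = x \<bullet> ((transpose P ** rmat G ** P) *v y)"
    by (simp only: dot_lmul_matrix matrix_vector_mul_assoc matrix_mul_assoc)
  finally show ?thesis .
qed

lemma matrix_nth_eq_inner_axis: "A $ i $ j = axis i 1 \<bullet> (A *v axis j (1::real))"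
  by (simp add: matrix_vector_mult_basis inner_axis' column_def)

lemma congruent_iff_form:
  "transpose P ** rmat G ** P = M \<longleftrightarrow> (\<forall>x y. bil G (P *v x) (P *v y) = x \<bullet> (M *v y))"
proof
  assume "\<forall>x y. bil G (P *v x) (P *v y) = x \<bullet> (M *v y)"
  then have "axis i 1 \<bullet> ((transpose P ** rmat G ** P) *v axis j 1) = axis i 1 \<bullet> (M *v axis j 1)"
    for i j by (simp add: bil_mult_vec)
  then show "transpose P ** rmat G ** P = M"
    by (simp add: vec_eq_iff matrix_nth_eq_inner_axis)
qed (simp add: bil_mult_vec)

definition spatial :: "'n \<Rightarrow> real^'n \<Rightarrow> real^'n" where
  "spatial k x = (\<chi> i. if i = k then 0 else x$i)"

definition minkowski_form :: "'n \<Rightarrow> real^'n \<Rightarrow> real^'n \<Rightarrow> real" where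
  "minkowski_form k x y = spatial k x \<bullet> spatial k y - x$k * y$k"

lemma inner_minkowski_matrix:
  "x \<bullet> ((\<chi> i j. if i = j then (if i = k then -1 else 1) else 0) *v y) = minkowski_form k x y"
proof -
  have "(\<chi> i j. if i = j then (if i = k then -1 else 1) else 0) *v y
      = (\<chi> i. if i = k then - y$i else y$i)"
    by (simp add: matrix_vector_mult_def vec_eq_iff if_distrib[of "\<lambda>c. c * _"] sum.delta cong: if_cong)
  then show ?thesis
    by (simp add: minkowski_form_def spatial_def inner_vec_def if_distrib[of "\<lambda>c. _ * c"]
        sum.If_cases sum_subtractf Diff_eq Compl_eq)
qed

lemma hyperbolic_signature_iff_form:
  "hyperbolic_signature G \<longleftrightarrow>
     (\<exists>(P::real^'n^'n) k. invertible P \<and> (\<forall>x y. bil G (P *v x) (P *v y) = minkowski_form k x y))"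
  by (simp add: hyperbolic_signature_def congruent_iff_form inner_minkowski_matrix)

lemma positive_definite_orthonormal_family:
  fixes G :: "int^'n::finite^'n"
  assumes sym: "symmetric_gram G" and pd: "positive_definite G"
  shows "\<exists>u::'n \<Rightarrow> real^'n. \<forall>a b. bil G (u a) (u b) = (if a = b then 1 else 0)"
proof -
  have "\<exists>u::'n \<Rightarrow> real^'n. \<forall>a\<in>S. \<forall>b\<in>S. bil G (u a) (u b) = (if a = b then 1 else 0)" for S
    using finite[of S]
  proof (induction S rule: finite_induct)
    case empty
    then show ?case by simp
  next
    case (insert a S)
    then obtain u :: "'n \<Rightarrow> real^'n"
      where u: "\<forall>b\<in>S. \<forall>c\<in>S. bil G (u b) (u c) = (if b = c then 1 else 0)"
      by blast
    have "card S < CARD('n)"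
      using insert.hyps by (intro psubset_card_mono) auto
    then have "dim ((\<lambda>b. rmat G *v u b) ` S) < DIM(real^'n)"
      using dim_le_card'[of "(\<lambda>b. rmat G *v u b) ` S"] card_image_le[of S "\<lambda>b. rmat G *v u b"]
      by simp
    then obtain w where "w \<noteq> 0" and w_orth: "\<And>b. b \<in> S \<Longrightarrow> bil G w (u b) = 0"
      by (rule orthogonal_to_subspace_exists) (auto simp: orthogonal_def bil_eq_inner span_base)
    then have w_pos: "bil G w w > 0"
      using pd by (simp add: positive_definite_def)
    define u' where "u' = u(a := (1 / sqrt (bil G w w)) *\<^sub>R w)"
    have u'_a: "bil G (u' a) (u' a) = 1"
      using w_pos by (simp add: u'_def bil_scaleR_left bil_scaleR_right field_simps)
    have u'_S: "u' b = u b" if "b \<in> S" for b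
      using that insert.hyps by (auto simp: u'_def)
    have u'_orth: "bil G (u' a) (u b) = 0" "bil G (u b) (u' a) = 0" if "b \<in> S" for b
      using that w_orth bil_commute[OF sym, of "u b" w]
      by (auto simp: u'_def bil_scaleR_left bil_scaleR_right)
    have "\<forall>b\<in>insert a S. \<forall>c\<in>insert a S. bil G (u' b) (u' c) = (if b = c then 1 else 0)"
      using u u'_a u'_S u'_orth insert.hyps by auto
    then show ?case by blast
  qed
  from this[of UNIV] show ?thesis by simp
qed

lemma positive_definite_congruent_identity:
  fixes G :: "int^'n::finite^'n"
  assumes sym: "symmetric_gram G" and pd: "positive_definite G"
  shows "\<exists>P::real^'n^'n. invertible P \<and> (\<forall>x y. bil G (P *v x) (P *v y) = x \<bullet> y)"
proof -
  obtain u :: "'n \<Rightarrow> real^'n" where u: "\<And>a b. bil G (u a) (u b) = (if a = b then 1 else 0)"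
    using positive_definite_orthonormal_family[OF assms] by blast
  define P :: "real^'n^'n" where "P = (\<chi> i b. u b $ i)"
  have "P *v axis b 1 = u b" for b
    by (simp add: P_def matrix_vector_mult_basis column_def)
  then have "(transpose P ** rmat G ** P) $ a $ b = mat 1 $ a $ b" for a b
    by (simp add: matrix_nth_eq_inner_axis bil_mult_vec[symmetric] u mat_def)
  then have form: "bil G (P *v x) (P *v y) = x \<bullet> y" for x y
    using congruent_iff_form[of P G "mat 1"] by (simp add: vec_eq_iff)
  have "inj ((*v) P)"
  proof (rule injI)
    fix x y assume "P *v x = P *v y"
    then have "(x - y) \<bullet> (x - y) = 0"
      by (metis form bil_zero_left matrix_vector_mult_diff_distrib right_minus_eq)
    then show "x = y" by simp
  qed
  then have "invertible P"
    by (simp add: invertible_left_inverse matrix_left_invertible_injective)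
  with form show ?thesis by blast
qed

section \<open>Orthogonal direct sums\<close>

definition vjoin :: "'a^'e::finite \<Rightarrow> 'a^'h::finite \<Rightarrow> 'a^('e+'h)" where
  "vjoin x y = (\<chi> i. case i of Inl a \<Rightarrow> x$a | Inr b \<Rightarrow> y$b)"

definition vfst :: "'a^('e::finite+'h::finite) \<Rightarrow> 'a^'e" where
  "vfst z = (\<chi> a. z $ Inl a)"

definition vsnd :: "'a^('e::finite+'h::finite) \<Rightarrow> 'a^'h" where
  "vsnd z = (\<chi> b. z $ Inr b)"

definition block_diag :: "'a::zero^'e::finite^'e \<Rightarrow> 'a^'h::finite^'h \<Rightarrow> 'a^('e+'h)^('e+'h)" where
  "block_diag A B = (\<chi> i j. case (i, j) of (Inl a, Inl b) \<Rightarrow> A$a$b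
                                      | (Inr a, Inr b) \<Rightarrow> B$a$b
                                      | _ \<Rightarrow> 0)"

lemma vjoin_nth [simp]: "vjoin x y $ Inl a = x$a" "vjoin x y $ Inr b = y$b"
  and vfst_nth [simp]: "vfst z $ a = z $ Inl a"
  and vsnd_nth [simp]: "vsnd z $ b = z $ Inr b"
  by (simp_all add: vjoin_def vfst_def vsnd_def)

lemma vfst_vjoin [simp]: "vfst (vjoin x y) = x"
  and vsnd_vjoin [simp]: "vsnd (vjoin x y) = y"
  and vjoin_vfst_vsnd [simp]: "vjoin (vfst z) (vsnd z) = z"
  by (simp_all add: vec_eq_iff vjoin_def split: sum.split)

lemma vjoin_0_0 [simp]: "vjoin 0 0 = 0"
  by (simp add: vec_eq_iff vjoin_def split: sum.split)

lemma vfst_add [simp]: "vfst (z + z') = vfst z + vfst z'"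
  and vsnd_add [simp]: "vsnd (z + z') = vsnd z + vsnd z'"
  and vfst_diff [simp]: "vfst (z - z') = vfst z - vfst z'"
  and vsnd_diff [simp]: "vsnd (z - z') = vsnd z - vsnd z'"
  and vfst_scaleR [simp]: "vfst (c *\<^sub>R w) = c *\<^sub>R vfst w"
  and vsnd_scaleR [simp]: "vsnd (c *\<^sub>R w) = c *\<^sub>R vsnd w"
  by (simp_all add: vec_eq_iff)

lemma vfst_rvec: "vfst (rvec r) = rvec (vfst r)"
  and vsnd_rvec: "vsnd (rvec r) = rvec (vsnd r)"
  by (simp_all add: vec_eq_iff rvec_def)

lemma sum_UNIV_Plus:
  fixes f :: "'e::finite + 'h::finite \<Rightarrow> 'a::comm_monoid_add"
  shows "(\<Sum>i\<in>UNIV. f i) = (\<Sum>a\<in>UNIV. f (Inl a)) + (\<Sum>b\<in>UNIV. f (Inr b))"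
proof -
  have "(\<Sum>i\<in>UNIV. f i) = (\<Sum>i\<in>UNIV <+> UNIV. f i)"
    by simp
  also have "\<dots> = (\<Sum>a\<in>UNIV. f (Inl a)) + (\<Sum>b\<in>UNIV. f (Inr b))"
    by (subst sum.Plus) (auto simp: o_def)
  finally show ?thesis .
qed

lemma block_diag_mult_vec:
  "block_diag A B *v z = vjoin (A *v vfst z) (B *v vsnd z)"
  by (simp add: vec_eq_iff split_sum_all block_diag_def matrix_vector_mult_def sum_UNIV_Plus)

lemma block_diag_mult: "block_diag A B ** block_diag C D = block_diag (A ** C) (B ** D)"
  by (simp add: vec_eq_iff split_sum_all block_diag_def matrix_matrix_mult_def sum_UNIV_Plus)

lemma block_diag_mat_1 [simp]: "block_diag (mat 1) (mat 1) = mat 1"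
  by (simp add: vec_eq_iff split_sum_all block_diag_def mat_def)

lemma dsum_eq_block_diag: "dsum A B = block_diag A B"
  by (simp add: dsum_def block_diag_def)

lemma rmat_dsum: "rmat (dsum A B) = block_diag (rmat A) (rmat B)"
  by (simp add: rmat_def dsum_def block_diag_def vec_eq_iff split_sum_all)

lemma bil_dsum: "bil (dsum A B) x y = bil A (vfst x) (vfst y) + bil B (vsnd x) (vsnd y)"
  by (simp add: bil_def dsum_def sum_UNIV_Plus sum.distrib)

lemma minkowski_form_Inr:
  "minkowski_form (Inr k) z z' = vfst z \<bullet> vfst z' + minkowski_form k (vsnd z) (vsnd z')"
  by (simp add: minkowski_form_def spatial_def inner_vec_def sum_UNIV_Plus cong: if_cong)

lemma symmetric_gram_dsum:
  "symmetric_gram A \<Longrightarrow> symmetric_gram B \<Longrightarrow> symmetric_gram (dsum A B)"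
  by (simp add: symmetric_gram_def dsum_def split_sum_all)

lemma even_lattice_dsum: "even_lattice A \<Longrightarrow> even_lattice B \<Longrightarrow> even_lattice (dsum A B)"
  by (simp add: even_lattice_def bil_dsum)

lemma hyperbolic_signature_dsum:
  fixes A :: "int^'e::finite^'e" and B :: "int^'h::finite^'h"
  assumes "symmetric_gram A" "positive_definite A" "hyperbolic_signature B"
  shows "hyperbolic_signature (dsum A B)"
proof -
  obtain Pe :: "real^'e^'e" where Pe: "invertible Pe" "\<And>x y. bil A (Pe *v x) (Pe *v y) = x \<bullet> y"
    using positive_definite_congruent_identity[OF assms(1,2)] by blast
  obtain Ph :: "real^'h^'h" and k where Ph: "invertible Ph"
    "\<And>x y. bil B (Ph *v x) (Ph *v y) = minkowski_form k x y"
    using assms(3) by (auto simp: hyperbolic_signature_iff_form)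
  obtain Qe Qh where "Qe ** Pe = mat 1" "Qh ** Ph = mat 1"
    using Pe(1) Ph(1) by (meson invertible_left_inverse)
  then have "block_diag Qe Qh ** block_diag Pe Ph = mat 1"
    by (simp add: block_diag_mult)
  then have "invertible (block_diag Pe Ph)"
    using invertible_left_inverse by blast
  moreover have "bil (dsum A B) (block_diag Pe Ph *v z) (block_diag Pe Ph *v z')
      = minkowski_form (Inr k) z z'" for z z'
    by (simp add: bil_dsum block_diag_mult_vec Pe(2) Ph(2) minkowski_form_Inr)
  ultimately show ?thesis
    unfolding hyperbolic_signature_iff_form by blast
qed

lemma rvec_vjoin: "rvec (vjoin a b) = vjoin (rvec a) (rvec b)"
  by (simp add: vec_eq_iff rvec_def split_sum_all)

lemma lat_iff_vfst_vsnd: "z \<in> lat \<longleftrightarrow> vfst z \<in> lat \<and> vsnd z \<in> lat"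
proof
  show "z \<in> lat \<Longrightarrow> vfst z \<in> lat \<and> vsnd z \<in> lat"
    by (auto simp: lat_def vfst_rvec vsnd_rvec)
  assume "vfst z \<in> lat \<and> vsnd z \<in> lat"
  then obtain a b where "vfst z = rvec a" "vsnd z = rvec b"
    by (auto simp: lat_def)
  then have "z = rvec (vjoin a b)"
    by (metis rvec_vjoin vjoin_vfst_vsnd)
  then show "z \<in> lat" by simp
qed

lemma dual_lat_dsum:
  "z \<in> dual_lat (dsum A B) \<longleftrightarrow> vfst z \<in> dual_lat A \<and> vsnd z \<in> dual_lat B"
proof
  assume z: "z \<in> dual_lat (dsum A B)"
  have "bil A (vfst z) (rvec w) \<in> \<int>" "bil B (vsnd z) (rvec w') \<in> \<int>" for w w'
    using z[unfolded dual_lat_def, simplified, rule_format, of "vjoin w 0"]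
      z[unfolded dual_lat_def, simplified, rule_format, of "vjoin 0 w'"]
    by (simp_all add: bil_dsum vfst_rvec vsnd_rvec)
  then show "vfst z \<in> dual_lat A \<and> vsnd z \<in> dual_lat B"
    by (simp add: dual_lat_def)
next
  assume "vfst z \<in> dual_lat A \<and> vsnd z \<in> dual_lat B"
  then have "bil A (vfst z) (rvec (vfst v)) + bil B (vsnd z) (rvec (vsnd v)) \<in> \<int>" for v
    by (simp add: dual_lat_def Ints_add)
  then show "z \<in> dual_lat (dsum A B)"
    by (simp add: dual_lat_def bil_dsum vfst_rvec vsnd_rvec)
qed

lemma disc_torsion_3_dsum:
  assumes "discr_period2 A"
  shows "z \<in> disc_torsion (dsum A B) 3 \<longleftrightarrow> vfst z \<in> lat \<and> vsnd z \<in> disc_torsion B 3"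
proof
  assume z: "z \<in> disc_torsion (dsum A B) 3"
  then have dual: "vfst z \<in> dual_lat A" "vsnd z \<in> dual_lat B"
    and "3 *\<^sub>R vfst z \<in> lat" "3 *\<^sub>R vsnd z \<in> lat"
    by (auto simp: disc_torsion_def dual_lat_dsum lat_iff_vfst_vsnd[of "3 *\<^sub>R z"])
  moreover have "2 *\<^sub>R vfst z \<in> lat"
    using assms dual by (simp add: discr_period2_def)
  ultimately have "3 *\<^sub>R vfst z - 2 *\<^sub>R vfst z \<in> lat"
    by (simp add: lat_diff)
  then show "vfst z \<in> lat \<and> vsnd z \<in> disc_torsion B 3"
    using dual \<open>3 *\<^sub>R vsnd z \<in> lat\<close> by (simp add: disc_torsion_def flip: scaleR_diff_left)
next
  assume z: "vfst z \<in> lat \<and> vsnd z \<in> disc_torsion B 3"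
  then have "3 *\<^sub>R vfst z \<in> lat"
    using lat_scaleR_of_int[of "vfst z" 3] by simp
  then show "z \<in> disc_torsion (dsum A B) 3"
    using z lat_subset_dual_lat
    by (auto simp: disc_torsion_def dual_lat_dsum lat_iff_vfst_vsnd[of "3 *\<^sub>R z"])
qed

lemma mod_lat_class_eq_iff: "mod_lat `` {z} = mod_lat `` {z'} \<longleftrightarrow> z - z' \<in> lat"
proof
  assume "mod_lat `` {z} = mod_lat `` {z'}"
  moreover have "z' \<in> mod_lat `` {z'}"
    by (simp add: mod_lat_def)
  ultimately have "z' \<in> mod_lat `` {z}"
    by simp
  then show "z - z' \<in> lat"
    by (simp add: mod_lat_def)
next
  assume "z - z' \<in> lat"
  then have "z - w \<in> lat \<longleftrightarrow> z' - w \<in> lat" for w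
  proof -
    have "z' - w = (z - w) - (z - z')" "z - w = (z' - w) + (z - z')"
      by simp_all
    then show ?thesis
      using \<open>z - z' \<in> lat\<close> lat_add lat_diff by metis
  qed
  then show "mod_lat `` {z} = mod_lat `` {z'}"
    by (auto simp: mod_lat_def)
qed

lemma vsnd_mod_lat_class: "vsnd ` (mod_lat `` {z}) = mod_lat `` {vsnd z}"
proof
  show "vsnd ` (mod_lat `` {z}) \<subseteq> mod_lat `` {vsnd z}"
    by (auto simp: mod_lat_def lat_iff_vfst_vsnd[of "z - _"])
  show "mod_lat `` {vsnd z} \<subseteq> vsnd ` (mod_lat `` {z})"
  proof
    fix w assume "w \<in> mod_lat `` {vsnd z}"
    then have "vjoin (vfst z) w \<in> mod_lat `` {z}"
      by (simp add: mod_lat_def lat_iff_vfst_vsnd[of "z - _"])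
    then show "w \<in> vsnd ` (mod_lat `` {z})"
      by (metis image_eqI vsnd_vjoin)
  qed
qed

lemma card_quotient_mod_lat_vsnd:
  assumes T: "\<And>z. z \<in> T \<longleftrightarrow> vfst z \<in> lat \<and> vsnd z \<in> T'"
  shows "card (T // mod_lat) = card (T' // mod_lat)"
proof (rule bij_betw_same_card)
  show "bij_betw (\<lambda>C. vsnd ` C) (T // mod_lat) (T' // mod_lat)"
    unfolding bij_betw_def
  proof
    show "inj_on (\<lambda>C. vsnd ` C) (T // mod_lat)"
    proof (rule inj_onI)
      fix C D assume "C \<in> T // mod_lat" "D \<in> T // mod_lat" and eq: "vsnd ` C = vsnd ` D"
      then obtain z z' where z: "z \<in> T" "C = mod_lat `` {z}" and z': "z' \<in> T" "D = mod_lat `` {z'}"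
        by (auto simp: quotient_def)
      have "vsnd z - vsnd z' \<in> lat"
        using eq z z' by (simp add: vsnd_mod_lat_class mod_lat_class_eq_iff)
      moreover have "vfst z - vfst z' \<in> lat"
        using T z(1) z'(1) by (simp add: lat_diff)
      ultimately show "C = D"
        using z z' by (simp add: mod_lat_class_eq_iff lat_iff_vfst_vsnd[of "z - z'"])
    qed
    show "(\<lambda>C. vsnd ` C) ` (T // mod_lat) = T' // mod_lat"
    proof
      show "(\<lambda>C. vsnd ` C) ` (T // mod_lat) \<subseteq> T' // mod_lat"
        using T by (force simp: quotient_def vsnd_mod_lat_class)
      show "T' // mod_lat \<subseteq> (\<lambda>C. vsnd ` C) ` (T // mod_lat)"
      proof
        fix C assume "C \<in> T' // mod_lat"
        then obtain y where y: "y \<in> T'" "C = mod_lat `` {y}"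
          by (auto simp: quotient_def)
        then have "vjoin 0 y \<in> T" "C = vsnd ` (mod_lat `` {vjoin 0 y})"
          using T by (simp_all add: vsnd_mod_lat_class)
        then show "C \<in> (\<lambda>C. vsnd ` C) ` (T // mod_lat)"
          by (auto simp: quotient_def)
      qed
    qed
  qed
qed

lemma discr_condition_dsum:
  assumes per: "discr_period2 A" and B: "discr_condition B"
  shows "discr_condition (dsum A B)"
  unfolding discr_condition_def
proof
  show "\<forall>x\<in>dual_lat (dsum A B). 6 *\<^sub>R x \<in> lat"
  proof
    fix x assume "x \<in> dual_lat (dsum A B)"
    then have dual: "vfst x \<in> dual_lat A" "vsnd x \<in> dual_lat B"
      by (auto simp: dual_lat_dsum)
    have "2 *\<^sub>R vfst x \<in> lat"
      using per dual by (simp add: discr_period2_def)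
    then have "of_int 3 *\<^sub>R (2 *\<^sub>R vfst x) \<in> lat"
      by (rule lat_scaleR_of_int)
    moreover have "6 *\<^sub>R vsnd x \<in> lat"
      using B dual by (simp add: discr_condition_def)
    ultimately show "6 *\<^sub>R x \<in> lat"
      by (simp add: lat_iff_vfst_vsnd[of "6 *\<^sub>R x"])
  qed
  show "card (disc_torsion (dsum A B) 3 // mod_lat) = 3"
    using card_quotient_mod_lat_vsnd[OF disc_torsion_3_dsum[OF per, where B = B]] B
    by (simp add: discr_condition_def)
qed

lemma automorphism_gram:
  assumes "automorphism G g"
  shows "transpose (rmat g) ** rmat G ** rmat g = rmat G"
proof -
  have "bil G (rmat g *v axis i 1) (rmat g *v axis j 1) = rmat G $ i $ j" for i j
  proof -
    have "bil G (rmat g *v axis i 1) (rmat g *v axis j 1)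
        = real_of_int (bil G (g *v axis i 1) (g *v axis j 1))"
      by (simp add: rvec_axis[symmetric] rvec_mult_vec[symmetric] bil_rvec)
    also have "\<dots> = rmat G $ i $ j"
      using assms by (simp add: automorphism_def bil_axis rmat_def)
    finally show ?thesis .
  qed
  then show ?thesis
    by (simp add: vec_eq_iff matrix_nth_eq_inner_axis[of "transpose _ ** _ ** _"] bil_mult_vec[symmetric])
qed

lemma bil_automorphism:
  "automorphism G g \<Longrightarrow> bil G (rmat g *v x) (rmat g *v y) = bil G x y"
  by (simp only: bil_mult_vec automorphism_gram bil_eq_inner[of G x y])

lemma automorphism_inverse:
  assumes "automorphism G g" "h ** g = mat 1" "g ** h = mat 1"
  shows "automorphism G h"
  unfolding automorphism_def
proof (intro conjI allI)
  show "\<exists>h'. h' ** h = mat 1 \<and> h ** h' = mat 1"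
    using assms by blast
  fix v w
  have "bil G (h *v v) (h *v w) = bil G (g *v (h *v v)) (g *v (h *v w))"
    using assms(1) by (simp add: automorphism_def)
  also have "\<dots> = bil G v w"
    using assms(3) by (simp add: matrix_vector_mul_assoc)
  finally show "bil G (h *v v) (h *v w) = bil G v w" .
qed

lemma dsum_mat_1_mult_vec: "dsum (mat 1) g *v z = vjoin (vfst z) (g *v vsnd z)"
  by (simp add: dsum_eq_block_diag block_diag_mult_vec)

lemma rmat_dsum_mat_1_mult_vec: "rmat (dsum (mat 1) g) *v z = vjoin (vfst z) (rmat g *v vsnd z)"
  by (simp add: rmat_dsum block_diag_mult_vec)

lemma automorphism_dsum:
  assumes "automorphism B g"
  shows "automorphism (dsum A B) (dsum (mat 1) g)"
proof -
  obtain h where "h ** g = mat 1" "g ** h = mat 1"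
    using assms by (auto simp: automorphism_def)
  then have "dsum (mat 1) h ** dsum (mat 1) g = mat 1" "dsum (mat 1) g ** dsum (mat 1) h = mat 1"
    by (simp_all add: dsum_eq_block_diag block_diag_mult)
  moreover have "bil (dsum A B) (dsum (mat 1) g *v v) (dsum (mat 1) g *v w) = bil (dsum A B) v w"
    for v w
    using assms by (simp add: dsum_mat_1_mult_vec bil_dsum automorphism_def)
  ultimately show ?thesis
    unfolding automorphism_def by blast
qed

lemma Z3_reversing_dsum:
  assumes "discr_period2 A" "Z3_reversing B g"
  shows "Z3_reversing (dsum A B) (dsum (mat 1) g)"
  unfolding Z3_reversing_def
proof
  fix x assume "x \<in> disc_torsion (dsum A B) 3"
  then have "vfst x \<in> lat" "vsnd x \<in> disc_torsion B 3"
    using disc_torsion_3_dsum[OF assms(1)] by auto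
  then have "vfst x + vfst x \<in> lat" "rmat g *v vsnd x + vsnd x \<in> lat"
    using assms(2) lat_add unfolding Z3_reversing_def by blast+
  then show "rmat (dsum (mat 1) g) *v x + x \<in> lat"
    by (simp only: lat_iff_vfst_vsnd[of "_ + x"] rmat_dsum_mat_1_mult_vec vfst_add vsnd_add
        vfst_vjoin vsnd_vjoin)
qed

section \<open>Lorentzian geometry and local finiteness of mirrors\<close>

text \<open>The coordinate form of the next lemma, for y = (a, A) and z = (b, B) in Minkowski coordinates
  with p = |a|, q = |b| and t = a.b.\<close>
lemma minkowski_majorant_ineq:
  fixes p q t A B :: real
  assumes p: "p \<ge> 0" and q: "q \<ge> 0" and t: "\<bar>t\<bar> \<le> p * q" and pA: "p\<^sup>2 < A\<^sup>2"
    and nz: "q > 0 \<or> B \<noteq> 0"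
  shows "(q\<^sup>2 - B\<^sup>2) * (p\<^sup>2 - A\<^sup>2) < 2 * (t - A * B)\<^sup>2"
proof -
  have pA': "p < \<bar>A\<bar>"
    using pA p by (simp add: power2_less_imp_less)
  consider "q\<^sup>2 > B\<^sup>2" | "q\<^sup>2 = B\<^sup>2" | "q\<^sup>2 < B\<^sup>2"
    by linarith
  then show ?thesis
  proof cases
    case 1
    then have "(q\<^sup>2 - B\<^sup>2) * (p\<^sup>2 - A\<^sup>2) < 0"
      using pA by (simp add: mult_pos_neg)
    then show ?thesis
      by (metis order.strict_trans2 mult_nonneg_nonneg zero_le_numeral zero_le_power2)
  next
    case 2
    then have qB: "q = \<bar>B\<bar>"
      using q by (metis abs_ge_zero power2_abs power2_eq_iff_nonneg)
    then have "\<bar>B\<bar> > 0"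
      using nz by auto
    then have "p * q < \<bar>A\<bar> * \<bar>B\<bar>"
      using pA' qB by (simp add: mult_strict_right_mono)
    then have "\<bar>t\<bar> < \<bar>A * B\<bar>"
      using t by (simp add: abs_mult)
    then show ?thesis
      using 2 by simp
  next
    case 3
    have qB': "q < \<bar>B\<bar>"
      using 3 q by (simp add: power2_less_imp_less)
    define X where "X = \<bar>A\<bar> * \<bar>B\<bar> - p * q"
    have "p * q < \<bar>A\<bar> * \<bar>B\<bar>"
      using pA' qB' p q by (simp add: mult_strict_mono')
    then have "0 < X" "X \<le> \<bar>t - A * B\<bar>"
      using t by (auto simp: X_def abs_mult)
    then have "X\<^sup>2 \<le> (t - A * B)\<^sup>2"
      by (metis abs_ge_zero less_imp_le power2_abs power_mono)
    moreover have "X\<^sup>2 - (A\<^sup>2 - p\<^sup>2) * (B\<^sup>2 - q\<^sup>2) = (\<bar>A\<bar> * q - \<bar>B\<bar> * p)\<^sup>2"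
      by (simp add: X_def power2_eq_square algebra_simps)
    then have "(A\<^sup>2 - p\<^sup>2) * (B\<^sup>2 - q\<^sup>2) \<le> X\<^sup>2"
      by (metis diff_ge_0_iff_ge zero_le_power2)
    moreover have "(q\<^sup>2 - B\<^sup>2) * (p\<^sup>2 - A\<^sup>2) = (A\<^sup>2 - p\<^sup>2) * (B\<^sup>2 - q\<^sup>2)"
      by (simp add: algebra_simps)
    moreover have "(A\<^sup>2 - p\<^sup>2) * (B\<^sup>2 - q\<^sup>2) > 0"
      using pA 3 by simp
    ultimately show ?thesis
      by linarith
  qed
qed

text \<open>Multiplied out: for timelike y the form z.z - 2 (y.z)^2 / y.y is positive definite.\<close>
lemma bil_timelike_majorant:
  fixes G :: "int^'n::finite^'n" and y z :: "real^'n"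
  assumes hyp: "hyperbolic_signature G" and y: "bil G y y < 0" and z: "z \<noteq> 0"
  shows "bil G z z * bil G y y < 2 * (bil G y z)\<^sup>2"
proof -
  obtain P :: "real^'n^'n" and k where "invertible P"
    and form: "\<And>x x'. bil G (P *v x) (P *v x') = minkowski_form k x x'"
    using hyp by (auto simp: hyperbolic_signature_iff_form)
  then obtain Q where "P ** Q = mat 1"
    using invertible_right_inverse by blast
  then obtain a b where ya: "y = P *v a" and zb: "z = P *v b"
    by (metis matrix_vector_mul_assoc matrix_vector_mul_lid)
  define p q t where "p = norm (spatial k a)" and "q = norm (spatial k b)"
    and "t = spatial k a \<bullet> spatial k b"
  have yy: "bil G y y = p\<^sup>2 - (a$k)\<^sup>2" and zz: "bil G z z = q\<^sup>2 - (b$k)\<^sup>2"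
    and yz: "bil G y z = t - a$k * b$k"
    by (simp_all add: ya zb form minkowski_form_def p_def q_def t_def power2_norm_eq_inner
        flip: power2_eq_square)
  have "q > 0 \<or> b$k \<noteq> 0"
  proof (rule ccontr)
    assume "\<not> (q > 0 \<or> b$k \<noteq> 0)"
    then have "spatial k b = 0" "b$k = 0"
      by (auto simp: q_def)
    then have "b = 0"
      by (auto simp: vec_eq_iff spatial_def split: if_splits)
    then show False
      using z zb by simp
  qed
  moreover have "\<bar>t\<bar> \<le> p * q"
    by (simp add: t_def p_def q_def Cauchy_Schwarz_ineq2)
  ultimately show ?thesis
    using minkowski_majorant_ineq[of p q t "a$k" "b$k"] y
    by (simp add: yy zz yz p_def q_def)
qed

lemma bil_timelike_ne_0:
  fixes G :: "int^'n::finite^'n" and y z :: "real^'n"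
  assumes "hyperbolic_signature G" "bil G y y < 0" "z \<noteq> 0" "bil G z z \<le> 0"
  shows "bil G y z \<noteq> 0"
  using bil_timelike_majorant[OF assms(1-3)] mult_nonpos_nonpos[of "bil G z z" "bil G y y"] assms(2,4)
  by auto

lemma finite_rvec_norm_le: "finite {r::int^'n::finite. norm (rvec r) \<le> R}"
proof -
  define N where "N = \<lceil>R\<rceil>"
  have "{r::int^'n. norm (rvec r) \<le> R} \<subseteq> vec_lambda ` (PiE UNIV (\<lambda>_. {-N..N}))"
  proof
    fix r :: "int^'n" assume "r \<in> {r. norm (rvec r) \<le> R}"
    then have "\<bar>real_of_int (r$i)\<bar> \<le> R" for i
      using component_le_norm_cart[of "rvec r" i] by (simp add: rvec_def)
    then have "real_of_int \<bar>r$i\<bar> \<le> real_of_int N" for i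
      unfolding N_def using le_of_int_ceiling[of R] by (metis of_int_abs order.trans)
    then have "r$i \<in> {-N..N}" for i
      by (metis of_int_le_iff abs_le_D1 abs_le_D2 atLeastAtMost_iff minus_le_iff)
    then have "vec_nth r \<in> PiE UNIV (\<lambda>_. {-N..N})"
      by auto
    then show "r \<in> vec_lambda ` (PiE UNIV (\<lambda>_. {-N..N}))"
      by (metis image_eqI vec_nth_inverse)
  qed
  moreover have "finite (vec_lambda ` (PiE (UNIV::'n set) (\<lambda>_. {-N..N})))"
    by (intro finite_imageI finite_PiE) auto
  ultimately show ?thesis
    by (rule finite_subset)
qed

lemma timelike_majorant_uniform:
  fixes G :: "int^'n::finite^'n" and C :: "(real^'n) set"
  assumes hyp: "hyperbolic_signature G" and C: "compact C" and neg: "\<forall>y\<in>C. bil G y y < 0"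
  shows "\<exists>c>0. \<forall>y\<in>C. \<forall>z. c * (norm z)\<^sup>2 \<le> bil G z z - 2 * (bil G y z)\<^sup>2 / bil G y y"
proof (cases "C = {}")
  case True
  then show ?thesis by (auto intro: exI[of _ 1])
next
  case False
  define Q :: "(real^'n) \<times> (real^'n) \<Rightarrow> real"
    where "Q = (\<lambda>(y, z). bil G z z - 2 * (bil G y z)\<^sup>2 / bil G y y)"
  define K where "K = C \<times> sphere (0::real^'n) 1"
  have "compact K"
    unfolding K_def by (intro compact_Times C compact_sphere)
  moreover have "K \<noteq> {}"
    using False norm_axis_1[of undefined] by (auto simp: K_def)
  moreover have "continuous_on K Q"
    using neg unfolding Q_def K_def case_prod_unfold
    by (intro continuous_intros) auto
  ultimately obtain p0 where p0: "p0 \<in> K" "\<forall>p\<in>K. Q p0 \<le> Q p"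
    using continuous_attains_inf by blast
  have Q_pos: "Q (y, z) > 0" if "(y, z) \<in> K" for y z
  proof -
    have "bil G y y < 0" "z \<noteq> 0"
      using that neg by (auto simp: K_def)
    then show ?thesis
      using bil_timelike_majorant[OF hyp] by (simp add: Q_def neg_divide_less_eq)
  qed
  have "Q p0 * (norm z)\<^sup>2 \<le> bil G z z - 2 * (bil G y z)\<^sup>2 / bil G y y" if y: "y \<in> C" for y z
  proof (cases "z = 0")
    case False
    define u where "u = (1 / norm z) *\<^sub>R z"
    have z: "z = norm z *\<^sub>R u"
      using False by (simp add: u_def)
    have "(y, u) \<in> K"
      using y False by (simp add: K_def u_def)
    then have "Q p0 * (norm z)\<^sup>2 \<le> Q (y, u) * (norm z)\<^sup>2"
      using p0 by (simp add: mult_right_mono)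
    also have "\<dots> = Q (y, z)"
      by (subst (2) z) (simp add: Q_def bil_scaleR_left bil_scaleR_right power2_eq_square field_simps)
    finally show ?thesis
      by (simp add: Q_def)
  qed simp
  moreover have "Q p0 > 0"
    using Q_pos p0(1) by (cases p0) blast
  ultimately show ?thesis
    by blast
qed

lemma finite_lattice_vectors_near_timelike:
  fixes G :: "int^'n::finite^'n" and C :: "(real^'n) set"
  assumes hyp: "hyperbolic_signature G" and C: "compact C" and neg: "\<forall>y\<in>C. bil G y y < 0"
  shows "finite {r. \<bar>bil G (rvec r) (rvec r)\<bar> \<le> M \<and> (\<exists>y\<in>C. \<bar>bil G y (rvec r)\<bar> \<le> M)}"
proof (cases "C = {}")
  case True
  then show ?thesis by simp
next
  case False
  have "continuous_on C (\<lambda>y. bil G y y)"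
    by (intro continuous_intros)
  then obtain y1 where y1: "y1 \<in> C" "\<forall>y\<in>C. bil G y y \<le> bil G y1 y1"
    using continuous_attains_sup[OF C False] by auto
  define m where "m = - bil G y1 y1"
  have m: "m > 0" "\<forall>y\<in>C. m \<le> - bil G y y"
    using y1 neg by (auto simp: m_def)
  obtain c where c: "c > 0" "\<forall>y\<in>C. \<forall>z. c * (norm z)\<^sup>2 \<le> bil G z z - 2 * (bil G y z)\<^sup>2 / bil G y y"
    using timelike_majorant_uniform[OF assms] by blast
  have "norm (rvec r) \<le> sqrt ((M + 2 * M\<^sup>2 / m) / c)"
    if r: "\<bar>bil G (rvec r) (rvec r)\<bar> \<le> M" and y: "y \<in> C" "\<bar>bil G y (rvec r)\<bar> \<le> M" for r y
  proof -
    have "(bil G y (rvec r))\<^sup>2 \<le> M\<^sup>2"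
      using y(2) by (metis abs_ge_zero power2_abs power_mono)
    then have "2 * (bil G y (rvec r))\<^sup>2 / (- bil G y y) \<le> 2 * M\<^sup>2 / m"
      using m y(1) by (intro frac_le) auto
    moreover have "c * (norm (rvec r))\<^sup>2 \<le> bil G (rvec r) (rvec r) + 2 * (bil G y (rvec r))\<^sup>2 / (- bil G y y)"
      using c(2) y(1) by (simp add: diff_divide_distrib)
    ultimately have "c * (norm (rvec r))\<^sup>2 \<le> M + 2 * M\<^sup>2 / m"
      using r by linarith
    then show ?thesis
      using c(1) by (intro real_le_rsqrt) (simp add: pos_le_divide_eq mult.commute)
  qed
  then show ?thesis
    by (blast intro: finite_subset[OF _ finite_rvec_norm_le])
qed

lemma root_bil_self: "r \<in> roots G \<Longrightarrow> bil G r r = 2 \<or> bil G r r = 6"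
  by (auto simp: roots_def two_roots_def six_roots_def)

lemma finite_roots_near_compact:
  fixes G :: "int^'n::finite^'n" and C :: "(real^'n) set"
  assumes "hyperbolic_signature G" "compact C" "\<forall>y\<in>C. bil G y y < 0"
  shows "finite {r \<in> roots G. \<exists>y\<in>C. \<bar>bil G y (rvec r)\<bar> \<le> 6}"
proof -
  have "\<bar>bil G (rvec r) (rvec r)\<bar> \<le> 6" if "r \<in> roots G" for r
    using root_bil_self[OF that] by (auto simp: bil_rvec)
  then show ?thesis
    by (blast intro: finite_subset[OF _ finite_lattice_vectors_near_timelike[OF assms]])
qed

definition regular_cone :: "int^'n^'n \<Rightarrow> (real^'n) set" where
  "regular_cone G = negative_cone G - (\<Union>r\<in>roots G. {x. bil G x (rvec r) = 0})"

lemma cells_sharp_eq_components: "cells_sharp G = components (regular_cone G)"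
  by (simp add: cells_sharp_def regular_cone_def)

lemma mem_regular_cone_iff:
  "x \<in> regular_cone G \<longleftrightarrow> bil G x x < 0 \<and> (\<forall>r\<in>roots G. bil G x (rvec r) \<noteq> 0)"
  by (auto simp: regular_cone_def negative_cone_def)

lemma open_regular_cone:
  fixes G :: "int^'n::finite^'n"
  assumes hyp: "hyperbolic_signature G"
  shows "open (regular_cone G)"
proof (rule Topological_Spaces.openI)
  fix y assume y: "y \<in> regular_cone G"
  have "open {x::real^'n. bil G x x < 0}"
    by (intro open_Collect_less continuous_intros)
  moreover have "y \<in> {x. bil G x x < 0}"
    using y by (simp add: mem_regular_cone_iff)
  ultimately obtain e where e: "e > 0" "cball y e \<subseteq> {x. bil G x x < 0}"
    using open_contains_cball by blast
  define F where "F = {r \<in> roots G. \<exists>y'\<in>cball y e. \<bar>bil G y' (rvec r)\<bar> \<le> 6}"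
  have "finite F"
    unfolding F_def using e by (intro finite_roots_near_compact[OF hyp]) auto
  define T where "T = ball y e - (\<Union>r\<in>F. {x. bil G x (rvec r) = 0})"
  have "closed {x::real^'n. bil G x (rvec r) = 0}" for r
    by (intro closed_Collect_eq continuous_intros)
  then have "open T"
    unfolding T_def using \<open>finite F\<close> by (intro open_Diff closed_UN) auto
  moreover have "y \<in> T"
    using y e by (auto simp: T_def F_def mem_regular_cone_iff)
  moreover have "T \<subseteq> regular_cone G"
  proof
    fix x assume x: "x \<in> T"
    then have "x \<in> cball y e"
      by (simp add: T_def)
    moreover have "bil G x (rvec r) \<noteq> 0" if r: "r \<in> roots G" for r
    proof (cases "r \<in> F")
      case False
      then have "\<not> \<bar>bil G x (rvec r)\<bar> \<le> 6"
        using r \<open>x \<in> cball y e\<close> unfolding F_def by blast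
      then show ?thesis
        by auto
    qed (use x in \<open>auto simp: T_def\<close>)
    ultimately show "x \<in> regular_cone G"
      using e by (auto simp: mem_regular_cone_iff)
  qed
  ultimately show "\<exists>T. open T \<and> y \<in> T \<and> T \<subseteq> regular_cone G"
    by blast
qed

section \<open>Automorphisms and cells\<close>

lemma automorphism_inverse_exists:
  assumes "automorphism G g"
  obtains h where "automorphism G h" "h ** g = mat 1" "g ** h = mat 1"
proof -
  obtain h where "h ** g = mat 1" "g ** h = mat 1"
    using assms by (auto simp: automorphism_def)
  with automorphism_inverse[OF assms this] that show thesis
    by blast
qed

lemma automorphism_roots:
  assumes aut: "automorphism G g" and r: "r \<in> roots G"
  shows "g *v r \<in> roots G"
proof -
  obtain h where "automorphism G h" "g ** h = mat 1"
    using automorphism_inverse_exists[OF aut] by blast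
  then have "bil G (g *v r) w = bil G r (h *v w)" for w
    using aut by (metis automorphism_def matrix_vector_mul_assoc matrix_vector_mul_lid)
  moreover have "bil G (g *v r) (g *v r) = bil G r r"
    using aut by (simp add: automorphism_def)
  ultimately show ?thesis
    using r by (auto simp: roots_def two_roots_def six_roots_def)
qed

lemma automorphism_regular_cone:
  assumes aut: "automorphism G g" and x: "x \<in> regular_cone G"
  shows "rmat g *v x \<in> regular_cone G"
proof -
  obtain h where h: "automorphism G h" "g ** h = mat 1"
    using automorphism_inverse_exists[OF aut] by blast
  have "bil G (rmat g *v x) (rvec r) \<noteq> 0" if r: "r \<in> roots G" for r
  proof -
    have "rvec r = rmat g *v rvec (h *v r)"
      using h(2) by (simp add: rvec_mult_vec matrix_vector_mul_assoc rmat_mult[symmetric])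
    then have "bil G (rmat g *v x) (rvec r) = bil G x (rvec (h *v r))"
      using aut by (simp add: bil_automorphism)
    then show ?thesis
      using x automorphism_roots[OF h(1) r] by (simp add: mem_regular_cone_iff)
  qed
  then show ?thesis
    using x aut by (simp add: mem_regular_cone_iff bil_automorphism)
qed

lemma automorphism_preserves_component:
  fixes G :: "int^'n::finite^'n"
  assumes aut: "automorphism G g" and p: "p \<in> regular_cone G"
    and gp: "rmat g *v p \<in> connected_component_set (regular_cone G) p"
  shows "(\<lambda>x. rmat g *v x) ` connected_component_set (regular_cone G) p
       = connected_component_set (regular_cone G) p"
    (is "?f g ` ?K = ?K")
proof -
  obtain h where h: "automorphism G h" "h ** g = mat 1" "g ** h = mat 1"
    using automorphism_inverse_exists[OF aut] by blast
  have image_in: "?f a ` ?K \<subseteq> connected_component_set (regular_cone G) q"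
    if "automorphism G a" "q \<in> ?f a ` ?K" for a q
    using that connected_component_subset[of "regular_cone G" p] automorphism_regular_cone
    by (intro connected_component_maximal connected_continuous_image
        matrix_vector_mult_linear_continuous_on connected_connected_component) auto
  have hg: "rmat h *v (rmat g *v x) = x" "rmat g *v (rmat h *v x) = x" for x
    using h by (simp_all add: matrix_vector_mul_assoc rmat_mult[symmetric])
  have "?f g ` ?K \<subseteq> ?K"
    using image_in[OF aut, of "rmat g *v p"] p connected_component_eq[OF gp] by auto
  moreover have "?f h ` ?K \<subseteq> ?K"
    using image_in[OF h(1), of p] gp hg(1)[of p] by (metis image_eqI)
  then have "?K \<subseteq> ?f g ` ?K"
    using hg(2) by (metis image_subset_iff image_eqI subsetI)
  ultimately show ?thesis
    by blast
qed

section \<open>The invariant cell of the direct sum\<close>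

lemma interior_finite_Union_closed_empty:
  assumes "finite F" "\<And>S. S \<in> F \<Longrightarrow> closed S \<and> interior S = {}"
  shows "interior (\<Union>F) = {}"
  using assms by (induction F rule: finite_induct) (auto simp: interior_closed_Un_empty_interior)

lemma positive_definite_small_vector_off_mirrors:
  fixes G :: "int^'n::finite^'n"
  assumes pd: "positive_definite G" and F: "finite F" "0 \<notin> F" and e: "e > 0"
  shows "\<exists>v. norm v \<le> e \<and> (\<forall>r\<in>F. bil G v (rvec r) \<noteq> 0)"
proof -
  have "interior (\<Union>r\<in>F. {x::real^'n. bil G x (rvec r) = 0}) = {}"
  proof (rule interior_finite_Union_closed_empty)
    fix S assume "S \<in> (\<lambda>r. {x::real^'n. bil G x (rvec r) = 0}) ` F"
    then obtain r where r: "r \<in> F" and S: "S = {x. (rmat G *v rvec r) \<bullet> x = 0}"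
      by (auto simp: bil_eq_inner inner_commute)
    have "r \<noteq> 0"
      using r F(2) by auto
    then have "bil G (rvec r) (rvec r) > 0"
      using positive_definite_bil_int_pos[OF pd] by (simp add: bil_rvec)
    then have "rmat G *v rvec r \<noteq> 0"
      by (auto simp: bil_eq_inner)
    then show "closed S \<and> interior S = {}"
      by (simp add: S closed_hyperplane)
  qed (use F in auto)
  moreover have "interior (ball (0::real^'n) e) \<noteq> {}"
    using e by simp
  ultimately obtain v where "v \<in> ball 0 e" "v \<notin> (\<Union>r\<in>F. {x::real^'n. bil G x (rvec r) = 0})"
    by (metis interior_mono subset_empty subsetI)
  then show ?thesis
    by (intro exI[of _ v]) auto
qed

lemma divisible_by_3_if_discr_period2:
  fixes A :: "int^'n::finite^'n" and v :: "int^'n"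
  assumes per: "discr_period2 A" and div: "\<And>u. 3 dvd bil A v u"
  shows "\<exists>w. v = 3 *s w"
proof -
  define x where "x = (1/3) *\<^sub>R rvec v"
  have "x \<in> dual_lat A"
    unfolding dual_lat_def mem_Collect_eq
  proof
    fix u
    obtain k where "bil A v u = 3 * k"
      using div[of u] by (auto elim: dvdE)
    then show "bil A x (rvec u) \<in> \<int>"
      by (simp add: x_def bil_scaleR_left bil_rvec)
  qed
  then obtain z where z: "2 *\<^sub>R x = rvec z"
    using per by (auto simp: discr_period2_def lat_def)
  have "rvec v = 3 *\<^sub>R (rvec v - 2 *\<^sub>R x)"
    by (simp add: x_def vec_eq_iff)
  then have "rvec v = rvec (3 *s (v - z))"
    by (simp add: z rvec_smult rvec_diff scaleR_diff_right)
  then show ?thesis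
    by (simp only: rvec_eq_iff) blast
qed

lemma dsum_root_vsnd:
  assumes "r \<in> roots (dsum A B)" "vfst r = 0"
  shows "vsnd r \<in> roots B"
proof -
  have "bil B (vsnd r) (vsnd r) = bil (dsum A B) r r"
    and "bil B (vsnd r) w = bil (dsum A B) r (vjoin 0 w)" for w
    using assms(2) by (simp_all add: bil_dsum)
  then show ?thesis
    using assms(1) by (auto simp: roots_def two_roots_def six_roots_def)
qed

text \<open>Here the hypotheses on the elliptic summand enter: for 2-roots through evenness, for 6-roots
  because period 2 forces the elliptic component into 3 L_e, making its norm at least 9.\<close>
lemma dsum_root_vsnd_nonpos:
  fixes A :: "int^'e::finite^'e"
  assumes pd: "positive_definite A" and ev: "even_lattice A" and per: "discr_period2 A"
    and r: "r \<in> roots (dsum A B)" and re: "vfst r \<noteq> 0"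
  shows "bil B (vsnd r) (vsnd r) \<le> 0"
proof -
  have E: "bil A (vfst r) (vfst r) > 0"
    using positive_definite_bil_int_pos[OF pd re] .
  show ?thesis
  proof (cases "r \<in> two_roots (dsum A B)")
    case True
    have "even (bil A (vfst r) (vfst r))"
      using ev by (simp add: even_lattice_def)
    then have "bil A (vfst r) (vfst r) \<ge> 2"
      using E by presburger
    then show ?thesis
      using True by (simp add: two_roots_def bil_dsum)
  next
    case False
    then have six: "bil (dsum A B) r r = 6" "\<And>w. 3 dvd bil (dsum A B) r w"
      using r by (auto simp: roots_def six_roots_def)
    have "3 dvd bil A (vfst r) u" for u
      using six(2)[of "vjoin u 0"] by (simp add: bil_dsum)
    then obtain w where w: "vfst r = 3 *s w"
      using divisible_by_3_if_discr_period2[OF per] by blast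
    then have "bil A w w > 0"
      using re positive_definite_bil_int_pos[OF pd] by fastforce
    then have "bil A (vfst r) (vfst r) \<ge> 9"
      by (simp add: w bil_smult_left bil_smult_right)
    then show ?thesis
      using six(1) by (simp add: bil_dsum)
  qed
qed

lemma continuous_on_vjoin [continuous_intros]:
  fixes f :: "'a::topological_space \<Rightarrow> real^'e::finite" and g :: "'a \<Rightarrow> real^'h::finite"
  shows "continuous_on S f \<Longrightarrow> continuous_on S g \<Longrightarrow> continuous_on S (\<lambda>x. vjoin (f x) (g x))"
  unfolding vjoin_def
proof (rule continuous_on_vec_lambda)
  fix i :: "'e + 'h"
  assume "continuous_on S f" "continuous_on S g"
  then show "continuous_on S (\<lambda>x. case i of Inl a \<Rightarrow> f x $ a | Inr b \<Rightarrow> g x $ b)"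
    by (cases i) (simp_all add: continuous_on_component)
qed

lemma bil_negative_near_compact:
  fixes A :: "int^'e::finite^'e" and B :: "int^'h::finite^'h" and C :: "(real^'h) set"
  assumes C: "compact C" and neg: "\<forall>y\<in>C. bil B y y < 0"
  shows "\<exists>e>0. \<forall>w y. norm w \<le> e \<longrightarrow> y \<in> C \<longrightarrow> bil A w w + bil B y y < 0"
proof (cases "C = {}")
  case True
  then show ?thesis by (auto intro: exI[of _ 1])
next
  case False
  have "continuous_on C (\<lambda>y. bil B y y)"
    by (intro continuous_intros)
  then obtain y1 where y1: "y1 \<in> C" "\<forall>y\<in>C. bil B y y \<le> bil B y1 y1"
    using continuous_attains_sup[OF C False] by auto
  have "continuous_on UNIV (\<lambda>w::real^'e. bil A w w)"
    by (intro continuous_intros)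
  moreover have m: "- bil B y1 y1 > 0"
    using neg y1(1) by auto
  ultimately have "\<exists>d>0. \<forall>w::real^'e. norm w < d \<longrightarrow> \<bar>bil A w w\<bar> < - bil B y1 y1"
    using continuous_on_iff[THEN iffD1, rule_format, of UNIV "\<lambda>w::real^'e. bil A w w" 0 "- bil B y1 y1"]
    by simp
  then obtain d where d: "d > 0" "\<And>w::real^'e. norm w < d \<Longrightarrow> \<bar>bil A w w\<bar> < - bil B y1 y1"
    by blast
  have "bil A w w + bil B y y < 0" if "norm w \<le> d / 2" "y \<in> C" for w y
  proof -
    have "\<bar>bil A w w\<bar> < - bil B y1 y1"
      using d that(1) by simp
    moreover have "bil B y y \<le> bil B y1 y1"
      using y1(2) that(2) by blast
    ultimately show ?thesis
      using abs_ge_self[of "bil A w w"] by linarith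
  qed
  then show ?thesis
    using d(1) by (intro exI[of _ "d / 2"]) auto
qed

lemma compact_nonzero_bounded_away:
  fixes f :: "'a::topological_space \<Rightarrow> real"
  assumes "compact C" "continuous_on C f" "\<forall>y\<in>C. f y \<noteq> 0"
  shows "\<exists>\<mu>>0. \<forall>y\<in>C. \<mu> \<le> \<bar>f y\<bar>"
proof (cases "C = {}")
  case True
  then show ?thesis by (auto intro: exI[of _ 1])
next
  case False
  have "continuous_on C (\<lambda>y. \<bar>f y\<bar>)"
    using assms(2) by (rule continuous_on_rabs)
  then obtain y0 where "y0 \<in> C" "\<forall>y\<in>C. \<bar>f y0\<bar> \<le> \<bar>f y\<bar>"
    using continuous_attains_inf[OF assms(1) False] by blast
  then show ?thesis
    using assms(3) by (intro exI[of _ "\<bar>f y0\<bar>"]) auto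
qed

lemma eventually_perturbation_nonzero:
  fixes \<beta> :: "'a::topological_space \<Rightarrow> real"
  assumes C: "compact C" and \<beta>: "continuous_on C \<beta>" "\<forall>y\<in>C. \<beta> y \<noteq> 0"
  shows "\<forall>\<^sub>F \<delta> in at_right 0. \<forall>y\<in>C. \<delta> * \<alpha> + \<beta> y \<noteq> 0"
proof -
  obtain \<mu> where \<mu>: "\<mu> > 0" "\<forall>y\<in>C. \<mu> \<le> \<bar>\<beta> y\<bar>"
    using compact_nonzero_bounded_away[OF assms] by blast
  have "((\<lambda>\<delta>. \<delta> * \<alpha>) \<longlongrightarrow> 0) (at_right 0)"
    by (intro tendsto_eq_intros) auto
  from tendstoD[OF this \<mu>(1)] have "\<forall>\<^sub>F \<delta> in at_right 0. \<bar>\<delta> * \<alpha>\<bar> < \<mu>"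
    by (simp add: dist_real_def)
  then show ?thesis
    by (rule eventually_mono) (metis \<mu>(2) abs_minus_cancel add_eq_0_iff2 not_le)
qed

lemma eventually_off_mirror_dsum:
  fixes Ge :: "int^'e::finite^'e" and Gh :: "int^'h::finite^'h" and C :: "(real^'h) set"
  assumes pd: "positive_definite Ge" and ev: "even_lattice Ge" and per: "discr_period2 Ge"
    and hyp: "hyperbolic_signature Gh" and C: "compact C" "C \<subseteq> regular_cone Gh"
    and r: "r \<in> roots (dsum Ge Gh)" and v: "vfst r \<noteq> 0 \<Longrightarrow> bil Ge v (rvec (vfst r)) \<noteq> 0"
  shows "\<forall>\<^sub>F \<delta> in at_right 0. \<forall>y\<in>C. bil (dsum Ge Gh) (vjoin (\<delta> *\<^sub>R v) y) (rvec r) \<noteq> 0"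
proof -
  define \<alpha> where "\<alpha> = bil Ge v (rvec (vfst r))"
  define \<beta> where "\<beta> = (\<lambda>y. bil Gh y (rvec (vsnd r)))"
  have pair: "bil (dsum Ge Gh) (vjoin (\<delta> *\<^sub>R v) y) (rvec r) = \<delta> * \<alpha> + \<beta> y" for \<delta> y
    by (simp add: bil_dsum vfst_rvec vsnd_rvec bil_scaleR_left \<alpha>_def \<beta>_def)
  show ?thesis
  proof (cases "vsnd r = 0")
    case True
    have "r \<noteq> 0"
      using root_bil_self[OF r] by auto
    then have "vfst r \<noteq> 0"
      using True by (metis vjoin_vfst_vsnd vjoin_0_0)
    then show ?thesis
      using v True by (simp add: pair \<alpha>_def \<beta>_def eventually_mono[OF eventually_at_right_less])
  next
    case False
    have "\<beta> y \<noteq> 0" if y: "y \<in> C" for y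
    proof (cases "vfst r = 0")
      case True
      then show ?thesis
        using dsum_root_vsnd[OF r True] y C(2) by (auto simp: mem_regular_cone_iff \<beta>_def)
    next
      case False
      then show ?thesis
        using bil_timelike_ne_0[OF hyp] dsum_root_vsnd_nonpos[OF pd ev per r] C(2) \<open>vsnd r \<noteq> 0\<close> y
        by (auto simp: mem_regular_cone_iff bil_rvec \<beta>_def)
    qed
    moreover have "continuous_on C \<beta>"
      unfolding \<beta>_def by (intro continuous_intros)
    ultimately show ?thesis
      by (simp add: pair eventually_perturbation_nonzero[OF C(1)])
  qed
qed

lemma exists_delta_off_mirrors_dsum:
  fixes Ge :: "int^'e::finite^'e" and Gh :: "int^'h::finite^'h" and C :: "(real^'h) set"
  assumes pd: "positive_definite Ge" and ev: "even_lattice Ge" and per: "discr_period2 Ge"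
    and hyp: "hyperbolic_signature Gh" and C: "compact C" "C \<subseteq> regular_cone Gh"
    and F: "finite F" "F \<subseteq> roots (dsum Ge Gh)"
    and v: "\<forall>r\<in>F. vfst r \<noteq> 0 \<longrightarrow> bil Ge v (rvec (vfst r)) \<noteq> 0"
  shows "\<exists>\<delta>::real. 0 < \<delta> \<and> \<delta> < 1 \<and>
           (\<forall>r\<in>F. \<forall>y\<in>C. bil (dsum Ge Gh) (vjoin (\<delta> *\<^sub>R v) y) (rvec r) \<noteq> 0)"
proof -
  have "\<forall>\<^sub>F \<delta> in at_right 0. \<forall>r\<in>F. \<forall>y\<in>C. bil (dsum Ge Gh) (vjoin (\<delta> *\<^sub>R v) y) (rvec r) \<noteq> 0"
    using F v by (intro eventually_ball_finite ballI eventually_off_mirror_dsum[OF pd ev per hyp C]) auto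
  moreover have "\<forall>\<^sub>F \<delta> in at_right 0. 0 < \<delta> \<and> \<delta> < (1::real)"
    using eventually_at_right_less order_tendstoD(2)[OF tendsto_ident_at zero_less_one]
    by (rule eventually_conj)
  ultimately have "\<forall>\<^sub>F \<delta> in at_right 0. 0 < \<delta> \<and> \<delta> < (1::real) \<and>
      (\<forall>r\<in>F. \<forall>y\<in>C. bil (dsum Ge Gh) (vjoin (\<delta> *\<^sub>R v) y) (rvec r) \<noteq> 0)"
    by (simp add: eventually_conj_iff)
  then show ?thesis
    by (rule eventually_happens'[rotated]) simp
qed

lemma regular_cone_dsum_lift:
  fixes Ge :: "int^'e::finite^'e" and Gh :: "int^'h::finite^'h" and C :: "(real^'h) set"
  assumes pd: "positive_definite Ge" and ev: "even_lattice Ge" and per: "discr_period2 Ge"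
    and hyp: "hyperbolic_signature Gh" and hyp_sum: "hyperbolic_signature (dsum Ge Gh)"
    and C: "compact C" "C \<subseteq> regular_cone Gh"
  shows "\<exists>w. \<forall>y\<in>C. vjoin w y \<in> regular_cone (dsum Ge Gh)"
proof -
  let ?G = "dsum Ge Gh"
  have "\<forall>y\<in>C. bil Gh y y < 0"
    using C(2) by (auto simp: mem_regular_cone_iff)
  then obtain e where e: "e > 0" "\<And>w y. norm w \<le> e \<Longrightarrow> y \<in> C \<Longrightarrow> bil Ge w w + bil Gh y y < 0"
    using bil_negative_near_compact[OF C(1)] by blast
  define B where "B = (\<lambda>(w, y). vjoin w y) ` (cball (0::real^'e) e \<times> C)"
  have "compact B"
    unfolding B_def case_prod_unfold
    by (intro compact_continuous_image compact_Times compact_cball C(1) continuous_intros)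
  moreover have B_neg: "\<forall>p\<in>B. bil ?G p p < 0"
    using e(2) by (auto simp: B_def bil_dsum)
  ultimately have "finite F" if "F = {r \<in> roots ?G. \<exists>p\<in>B. \<bar>bil ?G p (rvec r)\<bar> \<le> 6}" for F
    unfolding that by (rule finite_roots_near_compact[OF hyp_sum])
  then obtain F where F: "finite F" "F = {r \<in> roots ?G. \<exists>p\<in>B. \<bar>bil ?G p (rvec r)\<bar> \<le> 6}"
    by blast
  obtain v where v: "norm v \<le> e" "\<forall>re\<in>vfst ` F - {0}. bil Ge v (rvec re) \<noteq> 0"
    using positive_definite_small_vector_off_mirrors[OF pd _ _ e(1), of "vfst ` F - {0}"] F(1)
    by blast
  obtain \<delta> :: real where \<delta>: "0 < \<delta>" "\<delta> < 1"
    and off: "\<forall>r\<in>F. \<forall>y\<in>C. bil ?G (vjoin (\<delta> *\<^sub>R v) y) (rvec r) \<noteq> 0"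
    using exists_delta_off_mirrors_dsum[OF pd ev per hyp C F(1), of v] v(2) by (auto simp: F(2))
  have "vjoin (\<delta> *\<^sub>R v) y \<in> regular_cone ?G" if y: "y \<in> C" for y
  proof -
    have "norm (\<delta> *\<^sub>R v) \<le> e"
      using \<delta> v(1) mult_left_le_one_le[of "norm v" \<delta>] by simp
    then have B: "vjoin (\<delta> *\<^sub>R v) y \<in> B"
      using y by (auto simp: B_def)
    then have "bil ?G (vjoin (\<delta> *\<^sub>R v) y) (rvec r) \<noteq> 0" if "r \<in> roots ?G" for r
      using that off y by (cases "r \<in> F") (auto simp: F(2))
    then show ?thesis
      using B B_neg by (simp add: mem_regular_cone_iff)
  qed
  then show ?thesis
    by blast
qed

lemma P_direct_cell_dsum:
  fixes Ge :: "int^'e::finite^'e" and Gh :: "int^'h::finite^'h"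
  assumes pd: "positive_definite Ge" and ev: "even_lattice Ge" and per: "discr_period2 Ge"
    and hyp: "hyperbolic_signature Gh" and hyp_sum: "hyperbolic_signature (dsum Ge Gh)"
    and aut: "automorphism Gh g" and Kh: "Kh \<in> cells_sharp Gh" and dir: "P_direct g Kh"
  shows "\<exists>K. K \<in> cells_sharp (dsum Ge Gh) \<and> P_direct (dsum (mat 1) g) K"
proof -
  let ?G = "dsum Ge Gh"
  obtain y0 where y0: "y0 \<in> regular_cone Gh" and Kh_eq: "Kh = connected_component_set (regular_cone Gh) y0"
    using Kh by (auto simp: cells_sharp_eq_components components_def)
  have "y0 \<in> Kh" "rmat g *v y0 \<in> Kh"
    using y0 Kh_eq dir by (auto simp: P_direct_def)
  moreover have "path_connected Kh"
    unfolding Kh_eq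
    by (intro connected_open_path_connected open_connected_component open_regular_cone hyp) simp
  ultimately obtain \<gamma> where \<gamma>: "path \<gamma>" "path_image \<gamma> \<subseteq> Kh" "pathstart \<gamma> = y0"
    "pathfinish \<gamma> = rmat g *v y0"
    unfolding path_connected_def by blast
  define C where "C = path_image \<gamma>"
  have C: "compact C" "connected C" "C \<subseteq> regular_cone Gh" "y0 \<in> C" "rmat g *v y0 \<in> C"
    using \<gamma> connected_component_subset[of "regular_cone Gh" y0] pathstart_in_path_image[of \<gamma>]
      pathfinish_in_path_image[of \<gamma>]
    by (auto simp: C_def Kh_eq compact_path_image connected_path_image)
  obtain w where w: "\<forall>y\<in>C. vjoin w y \<in> regular_cone ?G"
    using regular_cone_dsum_lift[OF pd ev per hyp hyp_sum C(1,3)] by blast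
  define D where "D = (\<lambda>y. vjoin w y) ` C"
  define K where "K = connected_component_set (regular_cone ?G) (vjoin w y0)"
  have "vjoin w y0 \<in> regular_cone ?G"
    using w C(4) by blast
  then have "K \<in> cells_sharp ?G"
    by (auto simp: K_def cells_sharp_eq_components components_def)
  moreover have "connected D"
    unfolding D_def using C(2) by (intro connected_continuous_image continuous_intros)
  then have "D \<subseteq> K"
    unfolding K_def using C(4) w by (intro connected_component_maximal) (auto simp: D_def)
  then have "rmat (dsum (mat 1) g) *v vjoin w y0 \<in> K"
    using C(5) by (auto simp: D_def rmat_dsum_mat_1_mult_vec)
  then have "P_direct (dsum (mat 1) g) K"
    unfolding P_direct_def K_def
    using automorphism_preserves_component[OF automorphism_dsum[OF aut] \<open>vjoin w y0 \<in> regular_cone ?G\<close>]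
    by (simp add: K_def)
  ultimately show ?thesis
    by blast
qed

theorem lemma2p9:
  fixes Ge :: "int^'e::finite^'e" and Gh :: "int^'h::finite^'h"
  assumes "achiral Gh"
    and "symmetric_gram Ge" and "positive_definite Ge"
    and "generated_by_2roots Ge" and "discr_period2 Ge"
  shows "achiral (dsum Ge Gh)"
proof -
  have Gh: "symmetric_gram Gh" "even_lattice Gh" "hyperbolic_signature Gh" "discr_condition Gh"
    using assms(1) by (auto simp: achiral_def considered_lattice_def)
  obtain g Kh where g: "automorphism Gh g" "Kh \<in> cells_sharp Gh" "Z3_reversing Gh g" "P_direct g Kh"
    using assms(1) by (auto simp: achiral_def)
  have ev: "even_lattice Ge"
    using even_lattice_if_generated_by_2roots[OF assms(2,4)] .
  have hyp: "hyperbolic_signature (dsum Ge Gh)"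
    using hyperbolic_signature_dsum[OF assms(2,3) Gh(3)] .
  have "considered_lattice (dsum Ge Gh)"
    using symmetric_gram_dsum[OF assms(2) Gh(1)] even_lattice_dsum[OF ev Gh(2)] hyp
      discr_condition_dsum[OF assms(5) Gh(4)]
    by (simp add: considered_lattice_def)
  moreover obtain K where "K \<in> cells_sharp (dsum Ge Gh)" "P_direct (dsum (mat 1) g) K"
    using P_direct_cell_dsum[OF assms(3) ev assms(5) Gh(3) hyp g(1,2,4)] by blast
  ultimately show ?thesis
    using automorphism_dsum[OF g(1)] Z3_reversing_dsum[OF assms(5) g(3)]
    unfolding achiral_def by blast
qed

end
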